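(* Let $q\ge2$ and $b\in\mathbb{R}$, and let $U_C(b)$ be the operator on $\mathbb{C}^q\otimes\mathbb{C}^q$ with $\langle k\alpha|U_C(b)|j\beta\rangle=\frac1q\exp(\frac{2\pi i}{q}[bj\beta+(k\beta+j\alpha)])$, $k,\alpha,j,\beta\in\{0,\dots,q-1\}$. Then $U_C(b)=(F_q\otimes F_q)\,S\,D(b)$, where $F_q$ is the $q$-dimensional discrete Fourier transform and $D(b)$ is the diagonal unitary $\langle k\alpha|D(b)|j\beta\rangle=e^{2\pi i bj\beta/q}\delta_{kj}\delta_{\alpha\beta}$; consequently $U_C(b)$ is dual-unitary for every real $b$, and $e_p(U_C(b))\le\frac{q}{q+1}$, with equality for $b=1$.
   Context: Product basis $|i\alpha\rangle$; realignment $\langle\beta\alpha|X^{R_1}|ji\rangle=\langle i\alpha|X|j\beta\rangle$; a unitary is dual-unitary if its realignment is unitary. $S$ is the swap operator; $F_q$ has entries $\langle m|F_q|n\rangle=q^{-1/2}e^{2\pi i mn/q}$. $E(U)=1-q^{-4}\operatorname{tr}[(U^{R_1}U^{R_1\dagger})^2]$, $E(S)=1-1/q^2$, $e_p(U)=\frac{E(U)+E(US)-E(S)}{E(S)}$. *)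

theory Defs
  imports "HOL-Analysis.Analysis"
begin

text \<open>Operators on C^q (x) C^q are represented by their matrix entries in the product
basis: X (i,a) (j,b) is the entry <i a|X|j b>. Only indices in idx q matter.\<close>

type_synonym op2 = "nat \<times> nat \<Rightarrow> nat \<times> nat \<Rightarrow> complex"

definition idx :: "nat \<Rightarrow> (nat \<times> nat) set" where
  "idx q = {0..<q} \<times> {0..<q}"

definition opmult :: "nat \<Rightarrow> op2 \<Rightarrow> op2 \<Rightarrow> op2" where
  "opmult q X Y = (\<lambda>a c. \<Sum>b\<in>idx q. X a b * Y b c)"

definition opadj :: "op2 \<Rightarrow> op2" where
  "opadj X = (\<lambda>a b. cnj (X b a))"

definition opid :: op2 where
  "opid = (\<lambda>a b. if a = b then 1 else 0)"

definition opeq :: "nat \<Rightarrow> op2 \<Rightarrow> op2 \<Rightarrow> bool" where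
  "opeq q X Y \<longleftrightarrow> (\<forall>a\<in>idx q. \<forall>c\<in>idx q. X a c = Y a c)"

definition unitary_op :: "nat \<Rightarrow> op2 \<Rightarrow> bool" where
  "unitary_op q X \<longleftrightarrow> opeq q (opmult q X (opadj X)) opid \<and> opeq q (opmult q (opadj X) X) opid"

definition realign :: "op2 \<Rightarrow> op2" where
  "realign X = (\<lambda>(\<beta>, \<alpha>) (j, i). X (i, \<alpha>) (j, \<beta>))"

definition dual_unitary :: "nat \<Rightarrow> op2 \<Rightarrow> bool" where
  "dual_unitary q U \<longleftrightarrow> unitary_op q U \<and> unitary_op q (realign U)"

definition swap_op :: op2 where
  "swap_op = (\<lambda>(i, \<alpha>) (j, \<beta>). if i = \<beta> \<and> \<alpha> = j then 1 else 0)"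

definition tensor_op :: "(nat \<Rightarrow> nat \<Rightarrow> complex) \<Rightarrow> (nat \<Rightarrow> nat \<Rightarrow> complex) \<Rightarrow> op2" where
  "tensor_op A B = (\<lambda>(i, \<alpha>) (j, \<beta>). A i j * B \<alpha> \<beta>)"

definition dft :: "nat \<Rightarrow> nat \<Rightarrow> nat \<Rightarrow> complex" where
  "dft q m n = exp (2 * pi * \<i> * of_nat (m * n) / of_nat q) / complex_of_real (sqrt (real q))"

definition optrace :: "nat \<Rightarrow> op2 \<Rightarrow> complex" where
  "optrace q X = (\<Sum>a\<in>idx q. X a a)"

text \<open>E(U) = 1 - q^-4 tr[(U^R U^R\<dagger>)^2]; the trace is real, we take its real part.\<close>
definition Ent :: "nat \<Rightarrow> op2 \<Rightarrow> real" where
  "Ent q U = (let R = opmult q (realign U) (opadj (realign U))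
              in 1 - Re (optrace q (opmult q R R)) / real q ^ 4)"

definition ep :: "nat \<Rightarrow> op2 \<Rightarrow> real" where
  "ep q U = (Ent q U + Ent q (opmult q U swap_op) - Ent q swap_op) / Ent q swap_op"

definition UC :: "nat \<Rightarrow> real \<Rightarrow> op2" where
  "UC q b = (\<lambda>(k, \<alpha>) (j, \<beta>).
     exp (2 * pi * \<i> / of_nat q * complex_of_real (b * real j * real \<beta> + real (k * \<beta> + j * \<alpha>)))
     / of_nat q)"

definition Dop :: "nat \<Rightarrow> real \<Rightarrow> op2" where
  "Dop q b = (\<lambda>(k, \<alpha>) (j, \<beta>).
     if k = j \<and> \<alpha> = \<beta> then exp (2 * pi * \<i> * complex_of_real (b * real j * real \<beta>) / of_nat q) else 0)"

end

theory Submission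
  imports Defs
begin

(* U_C(b) = (F \<otimes> F) S D(b), and its realignment factors as (1 \<otimes> F) D(b) (F \<otimes> 1) S; both are
   products of unitaries, so U_C(b) is dual-unitary. For dual-unitary U one has E(U) = E(S), hence
   e_p(U) = E(US) / E(S) with E(S) = 1 - 1/q^2. The Gram matrix G = R R\<dagger> of the realignment R of
   U_C(b) S has entries of modulus |\<Sum>_j e^(2 \<pi> i b j (x - x') / q)| / q between rows (x, \<alpha>) and
   (x', \<alpha>'): modulus 1 when x = x', and 0 when x \<noteq> x' and b = 1, by orthogonality of characters
   of Z/q. So tr G^2 = \<Sum> |G|^2 \<ge> q^3, with equality for b = 1, i.e. E(US) \<le> 1 - 1/q. *)

section \<open>Roots of unity\<close>

definition phase :: "nat \<Rightarrow> real \<Rightarrow> complex" where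
  "phase q x = exp (2 * pi * \<i> * complex_of_real x / of_nat q)"

lemma phase_add: "phase q (x + y) = phase q x * phase q y"
  unfolding phase_def by (simp add: exp_add[symmetric] add_divide_distrib distrib_left)

lemma phase_0 [simp]: "phase q 0 = 1"
  by (simp add: phase_def)

lemma norm_phase [simp]: "norm (phase q x) = 1"
  by (simp add: phase_def)

lemma cnj_phase: "cnj (phase q x) = phase q (- x)"
  by (simp add: phase_def exp_cnj)

lemma phase_mult_cnj: "phase q x * cnj (phase q y) = phase q (x - y)"
  by (simp add: cnj_phase phase_add[symmetric])

lemma phase_of_nat_mult: "phase q (real n * x) = phase q x ^ n"
  unfolding phase_def exp_of_nat_mult[symmetric] by (simp add: mult_ac)

lemma phase_int_pow_eq_1:
  assumes "q > 0"
  shows "phase q (of_int d) ^ q = 1"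
proof -
  have "phase q (of_int d) ^ q = phase q (real q * of_int d)"
    by (simp add: phase_of_nat_mult)
  also have "\<dots> = exp ((2 * of_int d * pi) * \<i>)"
    using assms by (simp add: phase_def field_simps)
  finally show ?thesis
    using exp_integer_2pi[of "of_int d"] by simp
qed

lemma phase_int_neq_1:
  assumes "0 < \<bar>d\<bar>" "\<bar>d\<bar> < int q"
  shows "phase q (of_int d) \<noteq> 1"
proof
  assume "phase q (of_int d) = 1"
  then obtain n :: int where "2 * pi * of_int d / real q = of_int (2 * n) * pi"
    unfolding phase_def exp_eq_1 by auto
  then have "d = n * int q"
    using assms by (simp add: field_simps) (metis of_int_eq_iff of_int_mult of_int_of_nat_eq)
  moreover from this have "n \<noteq> 0"
    using assms by auto
  ultimately have "int q \<le> \<bar>d\<bar>"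
    using mult_right_mono[of 1 "\<bar>n\<bar>" "int q"] by (simp add: abs_mult)
  then show False
    using assms by simp
qed

lemma sum_phase_int_mult:
  assumes "\<bar>d\<bar> < int q"
  shows "(\<Sum>j<q. phase q (real j * of_int d)) = (if d = 0 then of_nat q else 0)"
proof (cases "d = 0")
  case False
  then have "(\<Sum>j<q. phase q (real j * of_int d)) = (\<Sum>j<q. phase q (of_int d) ^ j)"
    by (simp add: phase_of_nat_mult)
  also have "\<dots> = 0"
    using False assms geometric_sum[OF phase_int_neq_1] phase_int_pow_eq_1[of q d] by simp
  finally show ?thesis
    using False by simp
qed simp

section \<open>Operators on the two-qudit space\<close>

lemma mem_idx [simp]: "(i, j) \<in> idx q \<longleftrightarrow> i < q \<and> j < q"
  by (simp add: idx_def)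

lemma finite_idx [simp]: "finite (idx q)"
  by (simp add: idx_def)

lemma card_idx: "card (idx q) = q * q"
  by (simp add: idx_def card_cartesian_product)

lemma sum_idx: "(\<Sum>a\<in>idx q. f a) = (\<Sum>i<q. \<Sum>j<q. f (i, j))"
  by (simp add: idx_def sum.cartesian_product atLeast0LessThan)

lemma sum_idx_delta:
  assumes "c \<in> idx q"
  shows "(\<Sum>a\<in>idx q. if a = c then f a else 0) = f c"
  using assms by (simp add: sum.delta')

lemma opmult_assoc: "opmult q (opmult q A B) C = opmult q A (opmult q B C)"
proof (intro ext)
  fix a d
  have "opmult q (opmult q A B) C a d = (\<Sum>c\<in>idx q. \<Sum>b\<in>idx q. A a b * B b c * C c d)"
    by (simp add: opmult_def sum_distrib_right)
  also have "\<dots> = (\<Sum>b\<in>idx q. \<Sum>c\<in>idx q. A a b * B b c * C c d)"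
    by (rule sum.swap)
  also have "\<dots> = opmult q A (opmult q B C) a d"
    by (simp add: opmult_def sum_distrib_left mult.assoc)
  finally show "opmult q (opmult q A B) C a d = opmult q A (opmult q B C) a d" .
qed

lemma opadj_opadj [simp]: "opadj (opadj A) = A"
  by (simp add: opadj_def)

lemma opadj_opmult: "opadj (opmult q A B) = opmult q (opadj B) (opadj A)"
  by (simp add: opadj_def opmult_def fun_eq_iff mult.commute)

lemma opeq_sym: "opeq q A B \<Longrightarrow> opeq q B A"
  by (simp add: opeq_def)

lemma opeq_trans: "opeq q A B \<Longrightarrow> opeq q B C \<Longrightarrow> opeq q A C"
  by (simp add: opeq_def)

lemma opmult_opeq_cong: "opeq q A A' \<Longrightarrow> opeq q B B' \<Longrightarrow> opeq q (opmult q A B) (opmult q A' B')"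
  by (simp add: opeq_def opmult_def)

lemma opadj_opeq_cong: "opeq q A B \<Longrightarrow> opeq q (opadj A) (opadj B)"
  by (simp add: opeq_def opadj_def)

lemma opmult_opid_right: "opeq q (opmult q A opid) A"
  unfolding opeq_def opmult_def opid_def
proof (intro ballI)
  fix a c assume "a \<in> idx q" "c \<in> idx q"
  have "(\<Sum>b\<in>idx q. A a b * (if b = c then 1 else 0)) = (\<Sum>b\<in>idx q. if b = c then A a b else 0)"
    by (intro sum.cong) auto
  then show "(\<Sum>b\<in>idx q. A a b * (if b = c then 1 else 0)) = A a c"
    using \<open>c \<in> idx q\<close> by (simp add: sum_idx_delta)
qed

lemma opmult_opeq_opid_middle:
  assumes "opeq q X opid"
  shows "opeq q (opmult q (opmult q A X) C) (opmult q A C)"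
proof -
  have "opeq q (opmult q A X) A"
    using opmult_opeq_cong[of q A A X opid, OF _ assms] opmult_opid_right
    by (auto simp: opeq_def)
  then show ?thesis
    by (rule opmult_opeq_cong) (simp add: opeq_def)
qed

lemma unitary_op_opmult:
  assumes "unitary_op q A" "unitary_op q B"
  shows "unitary_op q (opmult q A B)"
proof -
  have "opmult q (opmult q A B) (opadj (opmult q A B)) =
        opmult q (opmult q A (opmult q B (opadj B))) (opadj A)"
    by (simp add: opadj_opmult opmult_assoc)
  moreover have "opmult q (opadj (opmult q A B)) (opmult q A B) =
                 opmult q (opmult q (opadj B) (opmult q (opadj A) A)) B"
    by (simp add: opadj_opmult opmult_assoc)
  ultimately show ?thesis
    using assms unfolding unitary_op_def
    by (metis opeq_trans opmult_opeq_opid_middle)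
qed

lemma unitary_op_opeq:
  assumes "opeq q X Y" "unitary_op q X"
  shows "unitary_op q Y"
proof -
  have "opeq q (opmult q Y (opadj Y)) (opmult q X (opadj X))"
    and "opeq q (opmult q (opadj Y) Y) (opmult q (opadj X) X)"
    using opeq_sym[OF assms(1)] by (simp_all add: opmult_opeq_cong opadj_opeq_cong)
  then show ?thesis
    using assms(2) unfolding unitary_op_def by (meson opeq_trans)
qed

lemma opadj_swap_op [simp]: "opadj swap_op = swap_op"
  by (auto simp: opadj_def swap_op_def fun_eq_iff)

lemma realign_swap_op [simp]: "realign swap_op = swap_op"
  by (auto simp: realign_def swap_op_def fun_eq_iff)

lemma opmult_swap_op_right:
  assumes "j < q" "\<beta> < q"
  shows "opmult q X swap_op a (j, \<beta>) = X a (\<beta>, j)"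
proof -
  have "opmult q X swap_op a (j, \<beta>) = (\<Sum>c\<in>idx q. if c = (\<beta>, j) then X a c else 0)"
    unfolding opmult_def by (intro sum.cong) (auto simp: swap_op_def split: if_splits)
  then show ?thesis
    using assms by (simp add: sum_idx_delta)
qed

lemma unitary_op_swap_op: "unitary_op q swap_op"
proof -
  have "opeq q (opmult q swap_op swap_op) opid"
    unfolding opeq_def by (clarsimp simp: opmult_swap_op_right) (auto simp: swap_op_def opid_def)
  then show ?thesis
    by (simp add: unitary_op_def)
qed

definition diag_op :: "(nat \<times> nat \<Rightarrow> complex) \<Rightarrow> op2" where
  "diag_op d = (\<lambda>a c. if a = c then d a else 0)"

lemma opmult_diag_op_right:
  assumes "c \<in> idx q"
  shows "opmult q X (diag_op d) a c = X a c * d c"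
proof -
  have "opmult q X (diag_op d) a c = (\<Sum>b\<in>idx q. if b = c then X a b * d b else 0)"
    unfolding opmult_def diag_op_def by (intro sum.cong) auto
  then show ?thesis
    using assms by (simp add: sum_idx_delta)
qed

lemma unitary_op_diag_op:
  assumes "\<And>a. a \<in> idx q \<Longrightarrow> norm (d a) = 1"
  shows "unitary_op q (diag_op d)"
proof -
  have "opadj (diag_op d) = diag_op (cnj \<circ> d)"
    by (auto simp: opadj_def diag_op_def fun_eq_iff)
  moreover have "d a * cnj (d a) = 1" "cnj (d a) * d a = 1" if "a \<in> idx q" for a
    using assms[OF that] by (simp_all add: complex_norm_square[symmetric] mult.commute)
  ultimately show ?thesis
    unfolding unitary_op_def opeq_def
    by (clarsimp simp: opmult_diag_op_right) (auto simp: diag_op_def opid_def)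
qed

lemma Dop_eq_diag_op: "Dop q b = diag_op (\<lambda>(j, \<beta>). phase q (b * real j * real \<beta>))"
  by (auto simp: Dop_def diag_op_def phase_def fun_eq_iff)

lemma unitary_op_Dop: "unitary_op q (Dop q b)"
  unfolding Dop_eq_diag_op by (rule unitary_op_diag_op) auto

section \<open>Dual-unitarity of U_C(b)\<close>

definition unitary_mat :: "nat \<Rightarrow> (nat \<Rightarrow> nat \<Rightarrow> complex) \<Rightarrow> bool" where
  "unitary_mat q A \<longleftrightarrow>
     (\<forall>i<q. \<forall>i'<q. (\<Sum>j<q. A i j * cnj (A i' j)) = of_bool (i = i')) \<and>
     (\<forall>j<q. \<forall>j'<q. (\<Sum>i<q. cnj (A i j) * A i j') = of_bool (j = j'))"

lemma unitary_op_tensor_op: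
  assumes "unitary_mat q A" "unitary_mat q B"
  shows "unitary_op q (tensor_op A B)"
proof -
  have "opmult q (tensor_op A B) (opadj (tensor_op A B)) (i, \<alpha>) (i', \<alpha>') =
          (\<Sum>j<q. A i j * cnj (A i' j)) * (\<Sum>\<beta><q. B \<alpha> \<beta> * cnj (B \<alpha>' \<beta>))" for i \<alpha> i' \<alpha>'
    by (simp add: opmult_def opadj_def tensor_op_def sum_idx sum_product mult_ac)
  moreover have "opmult q (opadj (tensor_op A B)) (tensor_op A B) (j, \<beta>) (j', \<beta>') =
          (\<Sum>i<q. cnj (A i j) * A i j') * (\<Sum>\<alpha><q. cnj (B \<alpha> \<beta>) * B \<alpha> \<beta>')" for j \<beta> j' \<beta>'
    by (simp add: opmult_def opadj_def tensor_op_def sum_idx sum_product mult_ac)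
  ultimately show ?thesis
    using assms by (auto simp: unitary_op_def unitary_mat_def opeq_def opid_def)
qed

lemma unitary_mat_id: "unitary_mat q (\<lambda>i j. of_bool (i = j))"
proof -
  have "(\<Sum>j<q. of_bool (i = j) * cnj (of_bool (i' = j))) = (of_bool (i = i') :: complex)"
    if "i < q" for i i'
  proof -
    have "(\<Sum>j<q. of_bool (i = j) * cnj (of_bool (i' = j))) =
          (\<Sum>j<q. if j = i then of_bool (i = i') else 0 :: complex)"
      by (intro sum.cong) auto
    then show ?thesis
      using that by simp
  qed
  then show ?thesis
    by (simp add: unitary_mat_def mult.commute)
qed

lemma sqrt_mult_sqrt_of_nat:
  "complex_of_real (sqrt (real q)) * complex_of_real (sqrt (real q)) = of_nat q"
  by (simp flip: of_real_mult)

lemma dft_eq_phase: "dft q m n = phase q (real m * real n) / sqrt (real q)"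
  by (simp add: dft_def phase_def)

lemma dft_commute: "dft q m n = dft q n m"
  by (simp add: dft_def mult.commute)

lemma dft_mult_cnj:
  assumes "q > 0"
  shows "dft q m n * cnj (dft q m' n) = phase q (real n * of_int (int m - int m')) / of_nat q"
  by (simp add: dft_eq_phase phase_mult_cnj sqrt_mult_sqrt_of_nat algebra_simps)

lemma unitary_mat_dft:
  assumes "q > 0"
  shows "unitary_mat q (dft q)"
proof -
  have orth: "(\<Sum>j<q. dft q m j * cnj (dft q m' j)) = of_bool (m = m')" if "m < q" "m' < q" for m m'
  proof -
    have "(\<Sum>j<q. dft q m j * cnj (dft q m' j)) = (\<Sum>j<q. phase q (real j * of_int (int m - int m'))) / of_nat q"
      using assms by (simp add: dft_mult_cnj sum_divide_distrib)
    also have "\<dots> = of_bool (m = m')"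
      using that assms sum_phase_int_mult[of "int m - int m'" q] by simp
    finally show ?thesis .
  qed
  show ?thesis
    unfolding unitary_mat_def
    using orth by (simp add: dft_commute[of q _ "_ :: nat"] mult.commute)
qed

lemma dft_mult_dft: "dft q m n * dft q m' n' = phase q (real m * real n + real m' * real n') / of_nat q"
  by (simp add: dft_eq_phase phase_add sqrt_mult_sqrt_of_nat)

lemma UC_eq_phase:
  "UC q b (k, \<alpha>) (j, \<beta>) = phase q (b * real j * real \<beta> + real k * real \<beta> + real j * real \<alpha>) / of_nat q"
  by (simp add: UC_def phase_def field_simps)

lemma UC_factorization:
  "opeq q (UC q b) (opmult q (opmult q (tensor_op (dft q) (dft q)) swap_op) (Dop q b))"
  unfolding opeq_def Dop_eq_diag_op
  by (clarsimp simp: opmult_diag_op_right opmult_swap_op_right)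
     (simp add: tensor_op_def dft_mult_dft UC_eq_phase algebra_simps flip: phase_add)

lemma realign_UC_factorization:
  "opeq q (realign (UC q b))
     (opmult q (opmult q (tensor_op (\<lambda>i j. of_bool (i = j)) (dft q)) (Dop q b))
               (opmult q (tensor_op (dft q) (\<lambda>i j. of_bool (i = j))) swap_op))"
  unfolding opeq_def
proof (clarify)
  fix \<beta> \<alpha> j k
  assume "(\<beta>, \<alpha>) \<in> idx q" "(j, k) \<in> idx q"
  then have idx: "\<beta> < q" "\<alpha> < q" "j < q" "k < q"
    by simp_all
  let ?L = "opmult q (tensor_op (\<lambda>i j. of_bool (i = j)) (dft q)) (Dop q b)"
  let ?R = "opmult q (tensor_op (dft q) (\<lambda>i j. of_bool (i = j))) swap_op"
  have "opmult q ?L ?R (\<beta>, \<alpha>) (j, k) =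
        (\<Sum>c\<in>idx q. if c = (\<beta>, j) then dft q \<alpha> j * phase q (b * real \<beta> * real j) * dft q \<beta> k else 0)"
    unfolding opmult_def[of q ?L ?R]
    by (intro sum.cong) (auto simp: Dop_eq_diag_op opmult_diag_op_right opmult_swap_op_right idx tensor_op_def)
  also have "\<dots> = dft q \<alpha> j * dft q \<beta> k * phase q (b * real \<beta> * real j)"
    using idx by (simp add: sum_idx_delta mult_ac)
  also have "\<dots> = realign (UC q b) (\<beta>, \<alpha>) (j, k)"
    by (simp add: realign_def UC_eq_phase dft_mult_dft algebra_simps flip: phase_add)
  finally show "realign (UC q b) (\<beta>, \<alpha>) (j, k) = opmult q ?L ?R (\<beta>, \<alpha>) (j, k)"
    by simp
qed

lemma dual_unitary_UC:
  assumes "q > 0"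
  shows "dual_unitary q (UC q b)"
proof -
  have F: "unitary_mat q (dft q)"
    using assms by (rule unitary_mat_dft)
  have "unitary_op q (opmult q (opmult q (tensor_op (dft q) (dft q)) swap_op) (Dop q b))"
    by (intro unitary_op_opmult unitary_op_tensor_op F unitary_op_swap_op unitary_op_Dop)
  moreover have "unitary_op q
     (opmult q (opmult q (tensor_op (\<lambda>i j. of_bool (i = j)) (dft q)) (Dop q b))
               (opmult q (tensor_op (dft q) (\<lambda>i j. of_bool (i = j))) swap_op))"
    by (intro unitary_op_opmult unitary_op_tensor_op F unitary_mat_id unitary_op_swap_op unitary_op_Dop)
  ultimately show ?thesis
    unfolding dual_unitary_def
    using unitary_op_opeq[OF opeq_sym[OF UC_factorization]]
          unitary_op_opeq[OF opeq_sym[OF realign_UC_factorization]]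
    by blast
qed

section \<open>Entangling power\<close>

abbreviation gram :: "nat \<Rightarrow> op2 \<Rightarrow> op2" where
  "gram q X \<equiv> opmult q X (opadj X)"

lemma opadj_gram: "opadj (gram q X) = gram q X"
  by (simp add: opadj_opmult)

lemma Re_optrace_square_selfadjoint:
  assumes "opadj G = G"
  shows "Re (optrace q (opmult q G G)) = (\<Sum>a\<in>idx q. \<Sum>c\<in>idx q. (cmod (G a c))\<^sup>2)"
proof -
  have "optrace q (opmult q G G) = (\<Sum>a\<in>idx q. \<Sum>c\<in>idx q. G a c * opadj G c a)"
    by (simp add: assms optrace_def opmult_def)
  also have "\<dots> = (\<Sum>a\<in>idx q. \<Sum>c\<in>idx q. G a c * cnj (G a c))"
    by (simp add: opadj_def)
  finally show ?thesis
    by (simp add: Re_sum complex_mult_cnj cmod_power2)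
qed

lemma Ent_eq_sum_norm_gram:
  "Ent q U = 1 - (\<Sum>a\<in>idx q. \<Sum>c\<in>idx q. (cmod (gram q (realign U) a c))\<^sup>2) / real q ^ 4"
  by (simp add: Ent_def Re_optrace_square_selfadjoint opadj_gram)

lemma Ent_of_unitary_realign:
  assumes "unitary_op q (realign U)" "q > 0"
  shows "Ent q U = 1 - 1 / real q ^ 2"
proof -
  have "(\<Sum>a\<in>idx q. \<Sum>c\<in>idx q. (cmod (gram q (realign U) a c))\<^sup>2) =
        (\<Sum>a\<in>idx q. \<Sum>c\<in>idx q. of_bool (a = c))"
    using assms(1) by (intro sum.cong refl) (auto simp: unitary_op_def opeq_def opid_def)
  also have "\<dots> = real q ^ 2"
    by (simp add: card_idx power2_eq_square)
  finally show ?thesis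
    using assms(2) by (simp add: Ent_eq_sum_norm_gram power2_eq_square eval_nat_numeral)
qed

lemma Ent_swap_op: "q > 0 \<Longrightarrow> Ent q swap_op = 1 - 1 / real q ^ 2"
  by (simp add: Ent_of_unitary_realign unitary_op_swap_op)

lemma ep_eq_of_dual_unitary:
  assumes "dual_unitary q U" "q > 0"
  shows "ep q U = Ent q (opmult q U swap_op) / (1 - 1 / real q ^ 2)"
  using assms by (simp add: ep_def dual_unitary_def Ent_of_unitary_realign Ent_swap_op)

lemma gram_realign_UC_swap_op:
  assumes "x < q" "\<alpha> < q" "x' < q" "\<alpha>' < q"
  shows "gram q (realign (opmult q (UC q b) swap_op)) (x, \<alpha>) (x', \<alpha>') =
           phase q (real x * real \<alpha> - real x' * real \<alpha>') *
           (\<Sum>j<q. phase q (real j * (b * (real x - real x')))) / of_nat q"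
proof -
  let ?R = "realign (opmult q (UC q b) swap_op)"
  let ?p = "phase q (real x * real \<alpha> - real x' * real \<alpha>')"
  let ?e = "\<lambda>j. phase q (real j * (b * (real x - real x')))"
  have "?R (x, \<alpha>) (j, i) * cnj (?R (x', \<alpha>') (j, i)) = ?p * ?e j / (of_nat q)\<^sup>2"
    if "j < q" "i < q" for j i
    using that assms
    by (simp add: realign_def opmult_swap_op_right UC_eq_phase phase_mult_cnj power2_eq_square
        algebra_simps flip: phase_add)
  then have "gram q ?R (x, \<alpha>) (x', \<alpha>') = (\<Sum>j<q. \<Sum>i<q. ?p * ?e j / (of_nat q)\<^sup>2)"
    by (simp add: opmult_def opadj_def sum_idx)
  also have "\<dots> = ?p * (\<Sum>j<q. ?e j) / of_nat q"
    by (simp add: sum_distrib_left sum_divide_distrib power2_eq_square)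
  finally show ?thesis .
qed

lemma norm_gram_realign_UC_swap_op_same_row:
  assumes "x < q" "\<alpha> < q" "\<alpha>' < q"
  shows "cmod (gram q (realign (opmult q (UC q b) swap_op)) (x, \<alpha>) (x, \<alpha>')) = 1"
  using assms by (simp add: gram_realign_UC_swap_op norm_divide norm_mult)

lemma gram_realign_UC1_swap_op_other_row:
  assumes "x < q" "\<alpha> < q" "x' < q" "\<alpha>' < q" "x \<noteq> x'"
  shows "gram q (realign (opmult q (UC q 1) swap_op)) (x, \<alpha>) (x', \<alpha>') = 0"
  using assms sum_phase_int_mult[of "int x - int x'" q] by (simp add: gram_realign_UC_swap_op)

lemma norm_gram_realign_UC_swap_op_ge:
  assumes "a \<in> idx q" "c \<in> idx q"
  shows "of_bool (fst a = fst c) \<le> (cmod (gram q (realign (opmult q (UC q b) swap_op)) a c))\<^sup>2"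
  using assms norm_gram_realign_UC_swap_op_same_row by (cases a; cases c) auto

lemma norm_gram_realign_UC1_swap_op:
  assumes "a \<in> idx q" "c \<in> idx q"
  shows "(cmod (gram q (realign (opmult q (UC q 1) swap_op)) a c))\<^sup>2 = of_bool (fst a = fst c)"
  using assms norm_gram_realign_UC_swap_op_same_row gram_realign_UC1_swap_op_other_row
  by (cases a; cases c) auto

lemma sum_idx_of_bool_fst_eq: "(\<Sum>a\<in>idx q. \<Sum>c\<in>idx q. of_bool (fst a = fst c) :: real) = real q ^ 3"
  by (simp add: sum_idx power3_eq_cube)

lemma Ent_UC_swap_op_le:
  assumes "q > 0"
  shows "Ent q (opmult q (UC q b) swap_op) \<le> 1 - 1 / real q"
proof -
  have "real q ^ 3 \<le>
        (\<Sum>a\<in>idx q. \<Sum>c\<in>idx q. (cmod (gram q (realign (opmult q (UC q b) swap_op)) a c))\<^sup>2)"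
    unfolding sum_idx_of_bool_fst_eq[symmetric]
    by (intro sum_mono norm_gram_realign_UC_swap_op_ge)
  then show ?thesis
    using assms by (simp add: Ent_eq_sum_norm_gram field_simps eval_nat_numeral)
qed

lemma Ent_UC1_swap_op:
  assumes "q > 0"
  shows "Ent q (opmult q (UC q 1) swap_op) = 1 - 1 / real q"
proof -
  have "(\<Sum>a\<in>idx q. \<Sum>c\<in>idx q. (cmod (gram q (realign (opmult q (UC q 1) swap_op)) a c))\<^sup>2) =
        real q ^ 3"
    unfolding sum_idx_of_bool_fst_eq[symmetric]
    by (intro sum.cong refl norm_gram_realign_UC1_swap_op)
  then show ?thesis
    using assms by (simp add: Ent_eq_sum_norm_gram field_simps eval_nat_numeral)
qed

lemma one_minus_inverse_div_one_minus_inverse_square: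
  fixes x :: "'a :: field"
  assumes "x \<noteq> 0" "x \<noteq> 1"
  shows "(1 - 1 / x) / (1 - 1 / x\<^sup>2) = x / (x + 1)"
proof -
  have "1 - 1 / x\<^sup>2 = (1 - 1 / x) * (1 + 1 / x)"
    by (simp add: algebra_simps power2_eq_square)
  moreover have "1 - 1 / x \<noteq> 0"
    using assms by simp
  ultimately have "(1 - 1 / x) / (1 - 1 / x\<^sup>2) = 1 / (1 + 1 / x)"
    by simp
  also have "\<dots> = x / (x + 1)"
    using assms(1) by (simp add: field_simps)
  finally show ?thesis .
qed

theorem mainTheorem9:
  fixes q :: nat and b :: real
  assumes "q \<ge> 2"
  shows "opeq q (UC q b) (opmult q (opmult q (tensor_op (dft q) (dft q)) swap_op) (Dop q b))
         \<and> dual_unitary q (UC q b)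
         \<and> ep q (UC q b) \<le> real q / (real q + 1)
         \<and> ep q (UC q 1) = real q / (real q + 1)"
proof -
  have q: "q > 0"
    using assms by simp
  have ep: "ep q (UC q c) = Ent q (opmult q (UC q c) swap_op) / (1 - 1 / real q ^ 2)" for c
    using q by (simp add: ep_eq_of_dual_unitary dual_unitary_UC)
  have "1 / real q ^ 2 < 1"
    using assms one_less_power[of "real q" 2] by simp
  then have "ep q (UC q b) \<le> (1 - 1 / real q) / (1 - 1 / real q ^ 2)"
    unfolding ep using Ent_UC_swap_op_le[OF q] by (simp add: divide_right_mono)
  moreover have "(1 - 1 / real q) / (1 - 1 / real q ^ 2) = real q / (real q + 1)"
    using assms by (intro one_minus_inverse_div_one_minus_inverse_square) auto
  ultimately show ?thesis
    using UC_factorization dual_unitary_UC[OF q] Ent_UC1_swap_op[OF q] by (simp add: ep)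
qed

end
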